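(* Let $\frac12<\beta<\frac54$ and $\alpha+\beta=\frac54$, and let $r>\max(2\beta,\beta+1)$. Then there exists a constant $C>0$ such that for all $v\in V^{r-1}$, $\theta\in H^{r-\beta}$, $\phi\in H^{r-\beta-1}$, \[ |\langle\Lambda^{-2\alpha}v\cdot\nabla\theta,\Lambda^{2r-2\beta-2}\phi\rangle|\le C\|v\|_{V^{r-1}}\|\theta\|_{H^{r-\beta}}\|\phi\|_{H^{r-\beta-1}}. \]
   Context: On the torus $\mathbb T=[0,2\pi]^3$, for $s\in\mathbb R$, $H^s$ is the space of real periodic functions/distributions $f=\sum_{k\in\mathbb Z^3\setminus\{0\}}f_ke^{ik\cdot x}$ (zero mean) with $f_{-k}=\overline{f_k}$ and $\|f\|_{H^s}^2=\sum_k|f_k|^2|k|^{2s}<\infty$; $V^s$ is the analogous space of vector fields $w=\sum_{k\neq0}w_ke^{ik\cdot x}$, $w_k\in\mathbb C^3$, $w_{-k}=\overline{w_k}$, $w_k\cdot k=0$ (divergence free, zero mean), with $\|w\|_{V^s}^2=\sum_k|w_k|^2|k|^{2s}$. $\Lambda^s$ is the Fourier multiplier by $|k|^s$. $\langle\cdot,\cdot\rangle$ is the $L^2(\mathbb T)$ scalar product (duality pairing). *)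

theory Defs
  imports "HOL-Analysis.Analysis"
begin

text \<open>Fourier-side model of the 3-torus [0,2pi]^3.  Frequencies are k :: int^3.
 A scalar periodic function/distribution is represented by its Fourier coefficients
 f :: int^3 => complex (f = sum_k f k e^{i k.x}); a vector field by coefficients
 w :: int^3 => complex^3.\<close>

definition knorm :: "int^3 \<Rightarrow> real" where
  "knorm k = sqrt (\<Sum>i\<in>UNIV. (real_of_int (k $ i))\<^sup>2)"

definition Hs :: "real \<Rightarrow> (int^3 \<Rightarrow> complex) \<Rightarrow> bool" where
  "Hs s f \<longleftrightarrow> f 0 = 0 \<and> (\<forall>k. f (- k) = cnj (f k)) \<and>
     (\<lambda>k. (cmod (f k))\<^sup>2 * knorm k powr (2 * s)) summable_on UNIV"

definition Hnorm :: "real \<Rightarrow> (int^3 \<Rightarrow> complex) \<Rightarrow> real" where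
  "Hnorm s f = sqrt (\<Sum>\<^sub>\<infinity>k. (cmod (f k))\<^sup>2 * knorm k powr (2 * s))"

definition Vs :: "real \<Rightarrow> (int^3 \<Rightarrow> complex^3) \<Rightarrow> bool" where
  "Vs s w \<longleftrightarrow> w 0 = 0 \<and> (\<forall>k. w (- k) = (\<chi> i. cnj (w k $ i))) \<and>
     (\<forall>k. (\<Sum>i\<in>UNIV. w k $ i * of_int (k $ i)) = 0) \<and>
     (\<lambda>k. (norm (w k))\<^sup>2 * knorm k powr (2 * s)) summable_on UNIV"

definition Vnorm :: "real \<Rightarrow> (int^3 \<Rightarrow> complex^3) \<Rightarrow> real" where
  "Vnorm s w = sqrt (\<Sum>\<^sub>\<infinity>k. (norm (w k))\<^sup>2 * knorm k powr (2 * s))"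

definition Lambda :: "real \<Rightarrow> (int^3 \<Rightarrow> complex) \<Rightarrow> (int^3 \<Rightarrow> complex)" where
  "Lambda s f = (\<lambda>k. complex_of_real (knorm k powr s) * f k)"

definition LambdaV :: "real \<Rightarrow> (int^3 \<Rightarrow> complex^3) \<Rightarrow> (int^3 \<Rightarrow> complex^3)" where
  "LambdaV s w = (\<lambda>k. (knorm k powr s) *\<^sub>R w k)"

definition grad :: "(int^3 \<Rightarrow> complex) \<Rightarrow> (int^3 \<Rightarrow> complex^3)" where
  "grad f = (\<lambda>k. \<chi> i. \<i> * of_int (k $ i) * f k)"

definition dotgrad :: "(int^3 \<Rightarrow> complex^3) \<Rightarrow> (int^3 \<Rightarrow> complex) \<Rightarrow> (int^3 \<Rightarrow> complex)" where
  "dotgrad v f = (\<lambda>k. \<Sum>\<^sub>\<infinity>j. (\<Sum>i\<in>UNIV. v j $ i * grad f (k - j) $ i))"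

text \<open>L^2(T) pairing of real functions via Parseval:
 <f,g> = (2 pi)^3 sum_k f_k conj(g_k).\<close>
definition l2pair :: "(int^3 \<Rightarrow> complex) \<Rightarrow> (int^3 \<Rightarrow> complex) \<Rightarrow> complex" where
  "l2pair f g = complex_of_real ((2 * pi) ^ 3) * (\<Sum>\<^sub>\<infinity>k. f k * cnj (g k))"

end

theory Submission
  imports Defs
begin

text \<open>On the Fourier side the pairing is a convolution sum over \<open>j + l = k\<close> with multiplier
  \<open>|j|^{-2\<alpha>} |l| |k|^{2r-2\<beta>-2}\<close>. After distributing the Sobolev weights of \<open>v\<close>, \<open>\<theta>\<close>, \<open>\<phi>\<close>, one has to
  bound \<open>\<Sum> V\<^sub>j T\<^sub>l P\<^sub>j\<^sub>+\<^sub>l |j|^{-\<gamma>} |l|^{1-s} |j+l|^{s-1}\<close> (with \<open>\<gamma> = r + 3/2 - 2\<beta>\<close>, \<open>s = r - \<beta>\<close>) by the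
  \<open>\<ell>\<^sup>2\<close> norms of \<open>V, T, P\<close>. As \<open>|j + l| \<le> 2 max |j| |l|\<close>, the weight is at most \<open>2^{s-1}\<close> times
  \<open>|j|^{-\<gamma>}\<close> on \<open>|j| \<le> |l|\<close> plus \<open>|j|^{-p} |l|^{-q}\<close> on \<open>|l| < |j|\<close>, where \<open>p = \<gamma> - s + 1 > 0\<close> and
  \<open>0 \<le> q \<le> s - 1\<close>, \<open>q < 3/2 \<le> p + q\<close>. Each piece passes a Schur test
  (Cauchy--Schwarz with a uniform column bound), the columns being controlled by the lattice sums
  \<open>\<Sum>\<^bsub>l \<noteq> 0\<^esub> |l|^{-2\<gamma>} < \<infinity>\<close> (as \<open>2\<gamma> > 3\<close>) and \<open>\<Sum>\<^bsub>0 < |l| < R\<^esub> |l|^{-2q} \<lesssim> R^{3-2q}\<close>, which in turn reduce to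
  one-dimensional power sums.\<close>

section \<open>One-dimensional power sums\<close>

lemma powr_square: "(x powr e)\<^sup>2 = x powr (2 * e)" for x e :: real
  by (cases "x = 0") (simp_all add: powr_power)

lemma powr_diff_quotient_ge:
  fixes x c :: real
  assumes x: "1 \<le> x" and c: "c \<noteq> 0" "c \<le> 1"
  shows "(x + 1) powr (c - 1) \<le> ((x + 1) powr c - x powr c) / c"
proof -
  have deriv: "\<And>y. x \<le> y \<Longrightarrow> y \<le> x + 1 \<Longrightarrow>
      ((\<lambda>z. z powr c) has_real_derivative c * y powr (c - 1)) (at y)"
    using x by (intro has_real_derivative_powr) auto
  obtain z where z: "x < z" "z < x + 1" "(x + 1) powr c - x powr c = (x + 1 - x) * (c * z powr (c - 1))"
    using MVT2[of x "x + 1" "\<lambda>z. z powr c" "\<lambda>z. c * z powr (c - 1)", OF _ deriv] by auto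
  have "(x + 1) powr (c - 1) \<le> z powr (c - 1)"
    using z x c by (intro powr_mono2') auto
  also have "\<dots> = ((x + 1) powr c - x powr c) / c"
    using z c by simp
  finally show ?thesis .
qed

lemma sum_powr_neg_le:
  fixes t :: real
  assumes "0 \<le> t" "t \<noteq> 1" "1 \<le> N"
  shows "(\<Sum>m = 1..N. real m powr (-t)) \<le> 1 + (real N powr (1 - t) - 1) / (1 - t)"
  using assms(3)
proof (induction N rule: dec_induct)
  case base
  then show ?case by simp
next
  case (step n)
  have "real (Suc n) powr (-t) \<le> (real (Suc n) powr (1 - t) - real n powr (1 - t)) / (1 - t)"
    using powr_diff_quotient_ge[of "real n" "1 - t"] step assms by (simp add: add.commute)
  then show ?case
    using step by (simp add: diff_divide_distrib)
qed

definition int_decay :: "real \<Rightarrow> int \<Rightarrow> real" where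
  "int_decay t n = max 1 \<bar>real_of_int n\<bar> powr (-t)"

lemma int_decay_nonneg: "0 \<le> int_decay t n"
  by (simp add: int_decay_def)

lemma sum_int_decay_le:
  "(\<Sum>n = -int N..int N. int_decay t n) \<le> 2 * (1 + (\<Sum>m = 1..N. real m powr (-t)))"
proof -
  have half: "(\<Sum>n\<in>f ` {0..N}. int_decay t n) = 1 + (\<Sum>m = 1..N. real m powr (-t))"
    if f: "f = int \<or> f = (\<lambda>m. - int m)" for f
  proof -
    have "(\<Sum>n\<in>f ` {0..N}. int_decay t n) = (\<Sum>m = 0..N. int_decay t (int m))"
      using f by (subst sum.reindex) (auto simp: inj_on_def int_decay_def)
    also have "\<dots> = int_decay t 0 + (\<Sum>m = 1..N. int_decay t (int m))"
      by (simp add: sum.atLeast_Suc_atMost)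
    also have "(\<Sum>m = 1..N. int_decay t (int m)) = (\<Sum>m = 1..N. real m powr (-t))"
      by (rule sum.cong) (auto simp: int_decay_def max_def)
    finally show ?thesis by (simp add: int_decay_def)
  qed
  have "{-int N..int N} \<subseteq> int ` {0..N} \<union> (\<lambda>m. - int m) ` {0..N}"
  proof
    fix n assume "n \<in> {-int N..int N}"
    then have "n = int (nat n) \<and> nat n \<in> {0..N} \<or> n = - int (nat (-n)) \<and> nat (-n) \<in> {0..N}"
      by auto
    then show "n \<in> int ` {0..N} \<union> (\<lambda>m. - int m) ` {0..N}"
      by blast
  qed
  then have "(\<Sum>n = -int N..int N. int_decay t n)
      \<le> (\<Sum>n\<in>int ` {0..N} \<union> (\<lambda>m. - int m) ` {0..N}. int_decay t n)"
    by (intro sum_mono2) (auto simp: int_decay_nonneg)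
  also have "\<dots> \<le> (\<Sum>n\<in>int ` {0..N}. int_decay t n) + (\<Sum>n\<in>(\<lambda>m. - int m) ` {0..N}. int_decay t n)"
    by (subst sum_Un) (auto intro!: sum_nonneg int_decay_nonneg)
  finally show ?thesis
    using half[of int] half[of "\<lambda>m. - int m"] by simp
qed

lemma sum_int_decay_bounded:
  assumes "1 < t"
  shows "(\<Sum>n = -int N..int N. int_decay t n) \<le> 2 * (2 + 1 / (t - 1))"
proof -
  have "(\<Sum>m = 1..N. real m powr (-t)) \<le> 1 + 1 / (t - 1)"
  proof (cases "N = 0")
    case False
    then have "(\<Sum>m = 1..N. real m powr (-t)) \<le> 1 + (real N powr (1 - t) - 1) / (1 - t)"
      using assms by (intro sum_powr_neg_le) auto
    also have "(real N powr (1 - t) - 1) / (1 - t) = (1 - real N powr (1 - t)) / (t - 1)"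
      using assms by (simp add: field_simps)
    also have "1 + (1 - real N powr (1 - t)) / (t - 1) \<le> 1 + 1 / (t - 1)"
      using assms by (simp add: divide_right_mono)
    finally show ?thesis .
  qed (use assms in simp)
  then show ?thesis
    using sum_int_decay_le[of t N] by (smt (verit))
qed

lemma sum_int_decay_growth:
  assumes "0 \<le> t" "t < 1" "1 \<le> N"
  shows "(\<Sum>n = -int N..int N. int_decay t n) \<le> 2 * (2 + 1 / (1 - t)) * real N powr (1 - t)"
proof -
  have ge1: "1 \<le> real N powr (1 - t)"
    using assms by (intro ge_one_powr_ge_zero) auto
  have "(\<Sum>m = 1..N. real m powr (-t)) \<le> 1 + (real N powr (1 - t) - 1) / (1 - t)"
    using assms by (intro sum_powr_neg_le) auto
  also have "\<dots> \<le> real N powr (1 - t) + real N powr (1 - t) / (1 - t)"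
    using assms ge1 by (smt (verit) divide_right_mono)
  finally have "2 * (1 + (\<Sum>m = 1..N. real m powr (-t))) \<le> 2 * (2 + 1 / (1 - t)) * real N powr (1 - t)"
    using ge1 by (simp add: field_simps)
  then show ?thesis
    using sum_int_decay_le[of t N] by linarith
qed

section \<open>Lattice sums in \<open>\<int>\<^sup>3\<close>\<close>

lemma knorm_eq_norm: "knorm l = norm (\<chi> i. real_of_int (l $ i) :: real^3)"
  by (simp add: knorm_def norm_vec_def L2_set_def)

lemma knorm_nonneg [simp]: "0 \<le> knorm l"
  by (simp add: knorm_def sum_nonneg)

lemma knorm_zero [simp]: "knorm 0 = 0"
  by (simp add: knorm_def)

lemma knorm_triangle: "knorm (j + l) \<le> knorm j + knorm l"
proof -
  have "(\<chi> i. real_of_int ((j + l) $ i)) = (\<chi> i. real_of_int (j $ i)) + (\<chi> i. real_of_int (l $ i) :: real^3)"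
    by (simp add: vec_eq_iff)
  then show ?thesis
    by (simp add: knorm_eq_norm norm_triangle_ineq)
qed

lemma abs_component_le_knorm: "\<bar>real_of_int (l $ i)\<bar> \<le> knorm l"
  using component_le_norm_cart[of "\<chi> i. real_of_int (l $ i) :: real^3" i] by (simp add: knorm_eq_norm)

lemma knorm_ge_1:
  assumes "l \<noteq> 0"
  shows "1 \<le> knorm l"
proof -
  obtain i where "l $ i \<noteq> 0"
    using assms by (auto simp: vec_eq_iff)
  then have "1 \<le> \<bar>real_of_int (l $ i)\<bar>"
    by linarith
  then show ?thesis
    using abs_component_le_knorm[of l i] by linarith
qed

lemma prod_UNIV_3: "prod f (UNIV :: 3 set) = f 1 * f 2 * f 3"
  unfolding UNIV_3 by (simp add: ac_simps)

text \<open>Since each \<open>|l_i| \<le> |l|\<close>, the isotropic weight \<open>|l|^{-3t}\<close> is dominated by a product of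
  one-dimensional weights, which reduces lattice sums in \<open>\<int>\<^sup>3\<close> to cubes of sums over \<open>\<int>\<close>.\<close>
lemma knorm_powr_le_prod_int_decay:
  assumes "0 \<le> t"
  shows "knorm l powr (-(3 * t)) \<le> (\<Prod>i\<in>UNIV. int_decay t (l $ i))"
proof (cases "l = 0")
  case True
  then show ?thesis
    by (simp add: prod_nonneg int_decay_nonneg)
next
  case False
  have comp: "knorm l powr (-t) \<le> int_decay t (l $ i)" for i
    unfolding int_decay_def using assms abs_component_le_knorm[of l i] knorm_ge_1[OF False]
    by (intro powr_mono2') auto
  have "knorm l powr (-(3 * t)) = knorm l powr (-t) * knorm l powr (-t) * knorm l powr (-t)"
    by (simp add: powr_add[symmetric])
  also have "\<dots> \<le> int_decay t (l $ 1) * int_decay t (l $ 2) * int_decay t (l $ 3)"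
    using comp by (intro mult_mono) (auto simp: int_decay_nonneg)
  finally show ?thesis
    by (simp add: prod_UNIV_3)
qed

lemma sum_prod_int_decay_le_cube:
  fixes A :: "(int^3) set"
  assumes "finite A" "\<And>l i. l \<in> A \<Longrightarrow> \<bar>l $ i\<bar> \<le> int N"
  shows "(\<Sum>l\<in>A. \<Prod>i\<in>UNIV. int_decay t (l $ i)) \<le> (\<Sum>n = -int N..int N. int_decay t n) ^ 3"
proof -
  let ?I = "{-int N..int N}"
  let ?coords = "\<lambda>l::int^3. (l $ 1, l $ 2, l $ 3)"
  let ?G = "\<lambda>(a, b, c). int_decay t a * int_decay t b * int_decay t c"
  have inj: "inj_on ?coords A"
    by (auto simp: inj_on_def vec_eq_iff forall_3)
  have "(\<Sum>l\<in>A. \<Prod>i\<in>UNIV. int_decay t (l $ i)) = sum ?G (?coords ` A)"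
    by (simp add: prod_UNIV_3 sum.reindex[OF inj])
  also have "\<dots> \<le> sum ?G (?I \<times> ?I \<times> ?I)"
  proof (rule sum_mono2)
    show "?coords ` A \<subseteq> ?I \<times> ?I \<times> ?I"
      using assms(2) by (fastforce simp: abs_le_iff minus_le_iff)
  qed (auto simp: int_decay_nonneg)
  also have "\<dots> = (\<Sum>n\<in>?I. int_decay t n) ^ 3"
    by (simp add: sum.cartesian_product[symmetric] power3_eq_cube sum_distrib_left sum_distrib_right mult_ac)
  finally show ?thesis .
qed

text \<open>Since \<open>0 powr x = 0\<close>, the zero frequency contributes nothing and needs no exclusion here.\<close>
lemma knorm_powr_summable:
  assumes "3 < t"
  shows "(\<lambda>l. knorm l powr (-t)) summable_on UNIV"
proof (rule nonneg_bdd_above_summable_on)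
  show "bdd_above (sum (\<lambda>l. knorm l powr (-t)) ` {A. A \<subseteq> UNIV \<and> finite A})"
  proof (rule bdd_aboveI2)
    fix A :: "(int^3) set" assume "A \<in> {A. A \<subseteq> UNIV \<and> finite A}"
    then have A: "finite A" by simp
    define N where "N = (\<Sum>l\<in>A. \<Sum>i\<in>UNIV. nat \<bar>l $ i\<bar>)"
    have box: "\<bar>l $ i\<bar> \<le> int N" if "l \<in> A" for l i
    proof -
      have "nat \<bar>l $ i\<bar> \<le> (\<Sum>i\<in>UNIV. nat \<bar>l $ i\<bar>)"
        by (rule member_le_sum) auto
      also have "\<dots> \<le> N"
        unfolding N_def using that A by (intro member_le_sum) auto
      finally show ?thesis by linarith
    qed
    have "(\<Sum>l\<in>A. knorm l powr (-t)) \<le> (\<Sum>l\<in>A. \<Prod>i\<in>UNIV. int_decay (t / 3) (l $ i))"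
      using assms knorm_powr_le_prod_int_decay[of "t / 3"] by (intro sum_mono) auto
    also have "\<dots> \<le> (\<Sum>n = -int N..int N. int_decay (t / 3) n) ^ 3"
      using A box by (rule sum_prod_int_decay_le_cube)
    also have "\<dots> \<le> (2 * (2 + 1 / (t / 3 - 1))) ^ 3"
      using assms by (intro power_mono sum_int_decay_bounded) (auto intro!: sum_nonneg int_decay_nonneg)
    finally show "(\<Sum>l\<in>A. knorm l powr (-t)) \<le> (2 * (2 + 1 / (t / 3 - 1))) ^ 3" .
  qed
qed simp

lemma knorm_powr_ball_sum_le:
  assumes "0 \<le> t" "t < 3"
  obtains K where "\<And>R A. 1 \<le> R \<Longrightarrow> finite A \<Longrightarrow> A \<subseteq> {l. knorm l < R} \<Longrightarrow>
    (\<Sum>l\<in>A. knorm l powr (-t)) \<le> K * R powr (3 - t)"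
proof
  fix R :: real and A :: "(int^3) set"
  assume R: "1 \<le> R" and A: "finite A" "A \<subseteq> {l. knorm l < R}"
  define K1 where "K1 = 2 * (2 + 1 / (1 - t / 3))"
  define N where "N = nat \<lfloor>R\<rfloor>"
  have N: "1 \<le> N" "real N \<le> R" "int N = \<lfloor>R\<rfloor>"
    using R by (auto simp: N_def le_nat_iff le_floor_iff)
  have box: "\<bar>l $ i\<bar> \<le> int N" if "l \<in> A" for l i
    using abs_component_le_knorm[of l i] that A N(3) by (auto simp: le_floor_iff)
  have "(\<Sum>l\<in>A. knorm l powr (-t)) \<le> (\<Sum>l\<in>A. \<Prod>i\<in>UNIV. int_decay (t / 3) (l $ i))"
    using assms knorm_powr_le_prod_int_decay[of "t / 3"] by (intro sum_mono) auto
  also have "\<dots> \<le> (\<Sum>n = -int N..int N. int_decay (t / 3) n) ^ 3"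
    using A(1) box by (rule sum_prod_int_decay_le_cube)
  also have "\<dots> \<le> (K1 * real N powr (1 - t / 3)) ^ 3"
    unfolding K1_def using assms N
    by (intro power_mono sum_int_decay_growth) (auto intro!: sum_nonneg int_decay_nonneg)
  also have "\<dots> = K1 ^ 3 * real N powr (3 - t)"
  proof -
    have "(real N powr (1 - t / 3)) ^ 3 = real N powr (3 - t)"
      using N by (subst powr_power) (auto simp: algebra_simps)
    then show ?thesis
      by (simp add: power_mult_distrib)
  qed
  also have "\<dots> \<le> K1 ^ 3 * R powr (3 - t)"
    using assms N unfolding K1_def by (intro mult_left_mono powr_mono2) auto
  finally show "(\<Sum>l\<in>A. knorm l powr (-t)) \<le> K1 ^ 3 * R powr (3 - t)" .
qed

section \<open>The trilinear convolution estimate\<close>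

text \<open>Schur-type test for convolution forms: Cauchy--Schwarz after splitting the summand as
  \<open>(F a H (a + b)) \<cdot> (G b y a b)\<close>; the first factor is controlled because \<open>(a, b) \<mapsto> (a, a + b)\<close>
  is injective, the second by the uniform column bound on \<open>y\<^sup>2\<close>.\<close>
lemma convolution_sum_le:
  fixes F G H :: "'a::cancel_semigroup_add \<Rightarrow> real" and y :: "'a \<Rightarrow> 'a \<Rightarrow> real"
  assumes S: "finite S"
    and F: "(\<lambda>a. (F a)\<^sup>2) summable_on UNIV" and G: "(\<lambda>a. (G a)\<^sup>2) summable_on UNIV"
    and H: "(\<lambda>a. (H a)\<^sup>2) summable_on UNIV"
    and column: "\<And>b A. finite A \<Longrightarrow> (\<Sum>a\<in>A. (y a b)\<^sup>2) \<le> Y"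
  shows "(\<Sum>(a, b)\<in>S. F a * G b * H (a + b) * y a b)
    \<le> sqrt Y * sqrt (\<Sum>\<^sub>\<infinity>a. (F a)\<^sup>2) * sqrt (\<Sum>\<^sub>\<infinity>a. (G a)\<^sup>2) * sqrt (\<Sum>\<^sub>\<infinity>a. (H a)\<^sup>2)"
proof -
  define u where "u = (\<lambda>(a, b). F a * H (a + b))"
  define w where "w = (\<lambda>(a, b). G b * y a b)"
  have sq_le: "(\<Sum>a\<in>A. (f a)\<^sup>2) \<le> (\<Sum>\<^sub>\<infinity>a. (f a)\<^sup>2)"
    if "finite A" "(\<lambda>a. (f a)\<^sup>2) summable_on UNIV" for A and f :: "'a \<Rightarrow> real"
    using that by (intro finite_sum_le_infsum) auto
  have "(\<Sum>(a, b)\<in>S. F a * G b * H (a + b) * y a b) = (\<Sum>p\<in>S. u p * w p)"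
    by (intro sum.cong) (auto simp: u_def w_def)
  also have "\<dots> \<le> (\<Sum>p\<in>S. \<bar>u p\<bar> * \<bar>w p\<bar>)"
    by (intro sum_mono) (simp flip: abs_mult)
  also have "\<dots> \<le> L2_set u S * L2_set w S"
    by (rule L2_set_mult_ineq)
  finally have CS: "(\<Sum>(a, b)\<in>S. F a * G b * H (a + b) * y a b) \<le> L2_set u S * L2_set w S" .
  have u: "L2_set u S \<le> sqrt (\<Sum>\<^sub>\<infinity>a. (F a)\<^sup>2) * sqrt (\<Sum>\<^sub>\<infinity>a. (H a)\<^sup>2)"
  proof -
    let ?shear = "\<lambda>(a, b). (a, a + b)"
    let ?M = "?shear ` S"
    have inj: "inj_on ?shear S"
      by (auto simp: inj_on_def)
    have "(\<Sum>p\<in>S. (u p)\<^sup>2) = (\<Sum>(a, c)\<in>?M. (F a)\<^sup>2 * (H c)\<^sup>2)"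
      by (subst sum.reindex[OF inj]) (simp add: u_def case_prod_beta power_mult_distrib)
    also have "\<dots> \<le> (\<Sum>(a, c)\<in>fst ` ?M \<times> snd ` ?M. (F a)\<^sup>2 * (H c)\<^sup>2)"
      using S by (intro sum_mono2) (auto simp: subset_fst_snd)
    also have "\<dots> = (\<Sum>a\<in>fst ` ?M. (F a)\<^sup>2) * (\<Sum>c\<in>snd ` ?M. (H c)\<^sup>2)"
      by (simp add: sum_product sum.cartesian_product)
    also have "\<dots> \<le> (\<Sum>\<^sub>\<infinity>a. (F a)\<^sup>2) * (\<Sum>\<^sub>\<infinity>a. (H a)\<^sup>2)"
      using S F H by (intro mult_mono sq_le) (auto intro!: sum_nonneg infsum_nonneg)
    finally show ?thesis
      unfolding L2_set_def real_sqrt_mult[symmetric] by (rule real_sqrt_le_mono)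
  qed
  have w: "L2_set w S \<le> sqrt Y * sqrt (\<Sum>\<^sub>\<infinity>a. (G a)\<^sup>2)"
  proof -
    have Y: "0 \<le> Y"
      using column[of "{}"] by simp
    have "(\<Sum>p\<in>S. (w p)\<^sup>2) \<le> (\<Sum>p\<in>fst ` S \<times> snd ` S. (w p)\<^sup>2)"
      using S by (intro sum_mono2) (auto simp: subset_fst_snd)
    also have "\<dots> = (\<Sum>a\<in>fst ` S. \<Sum>b\<in>snd ` S. (G b)\<^sup>2 * (y a b)\<^sup>2)"
      unfolding sum.cartesian_product w_def by (intro sum.cong) (auto simp: power_mult_distrib)
    also have "\<dots> = (\<Sum>b\<in>snd ` S. (G b)\<^sup>2 * (\<Sum>a\<in>fst ` S. (y a b)\<^sup>2))"
      by (subst sum.swap) (simp add: sum_distrib_left)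
    also have "\<dots> \<le> (\<Sum>b\<in>snd ` S. (G b)\<^sup>2 * Y)"
      using S by (intro sum_mono mult_left_mono column) auto
    also have "\<dots> \<le> Y * (\<Sum>\<^sub>\<infinity>a. (G a)\<^sup>2)"
      using S G Y by (simp add: sum_distrib_left[symmetric] mult.commute mult_left_mono sq_le)
    finally show ?thesis
      unfolding L2_set_def real_sqrt_mult[symmetric] by (rule real_sqrt_le_mono)
  qed
  show ?thesis
    using order_trans[OF CS mult_mono[OF u w]] by (simp add: L2_set_nonneg infsum_nonneg mult_ac)
qed

lemma convolution_weight_le:
  assumes s: "1 \<le> s" and q: "0 \<le> q" "q \<le> s - 1"
  shows "knorm j powr (-\<gamma>) * knorm l powr (1 - s) * knorm (j + l) powr (s - 1)
    \<le> 2 powr (s - 1) * ((if knorm j \<le> knorm l then knorm j powr (-\<gamma>) else 0)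
        + (if knorm l < knorm j then knorm j powr (s - 1 - \<gamma>) * knorm l powr (-q) else 0))"
proof (cases "j = 0 \<or> l = 0")
  case True
  then show ?thesis
    by auto
next
  case False
  then have j: "0 < knorm j" and l: "1 \<le> knorm l"
    using knorm_ge_1 by (auto intro: less_le_trans[OF zero_less_one])
  show ?thesis
  proof (cases "knorm j \<le> knorm l")
    case True
    have "knorm (j + l) powr (s - 1) \<le> (2 * knorm l) powr (s - 1)"
      using True knorm_triangle[of j l] s by (intro powr_mono2) auto
    also have "\<dots> = 2 powr (s - 1) * knorm l powr (s - 1)"
      by (simp add: powr_mult)
    finally have sum_le: "knorm (j + l) powr (s - 1) \<le> 2 powr (s - 1) * knorm l powr (s - 1)" .
    have "knorm j powr (-\<gamma>) * knorm l powr (1 - s) * knorm (j + l) powr (s - 1)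
        \<le> 2 powr (s - 1) * knorm j powr (-\<gamma>) * (knorm l powr (1 - s) * knorm l powr (s - 1))"
      using mult_left_mono[OF sum_le, of "knorm j powr (-\<gamma>) * knorm l powr (1 - s)"] by (simp add: mult_ac)
    also have "knorm l powr (1 - s) * knorm l powr (s - 1) = 1"
      using l by (simp flip: powr_add)
    finally show ?thesis
      using True by simp
  next
    case False
    have "knorm (j + l) powr (s - 1) \<le> (2 * knorm j) powr (s - 1)"
      using False knorm_triangle[of j l] s by (intro powr_mono2) auto
    also have "\<dots> = 2 powr (s - 1) * knorm j powr (s - 1)"
      by (simp add: powr_mult)
    finally have sum_le: "knorm (j + l) powr (s - 1) \<le> 2 powr (s - 1) * knorm j powr (s - 1)" .
    have "knorm j powr (-\<gamma>) * knorm l powr (1 - s) * knorm (j + l) powr (s - 1)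
        \<le> 2 powr (s - 1) * (knorm j powr (-\<gamma>) * knorm j powr (s - 1)) * knorm l powr (1 - s)"
      using mult_left_mono[OF sum_le, of "knorm j powr (-\<gamma>) * knorm l powr (1 - s)"] by (simp add: mult_ac)
    also have "knorm j powr (-\<gamma>) * knorm j powr (s - 1) = knorm j powr (s - 1 - \<gamma>)"
      by (simp flip: powr_add)
    also have "knorm l powr (1 - s) \<le> knorm l powr (-q)"
      using l q by (intro powr_mono) auto
    finally show ?thesis
      using False by (simp add: mult_left_mono)
  qed
qed

lemma low_frequency_column_le:
  assumes "3 < 2 * \<gamma>" "finite A"
  shows "(\<Sum>j\<in>A. (if knorm j \<le> knorm l then knorm j powr (-\<gamma>) else 0)\<^sup>2)
    \<le> (\<Sum>\<^sub>\<infinity>j. knorm j powr (-(2 * \<gamma>)))"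
proof -
  have "(\<Sum>j\<in>A. (if knorm j \<le> knorm l then knorm j powr (-\<gamma>) else 0)\<^sup>2)
      \<le> (\<Sum>j\<in>A. knorm j powr (-(2 * \<gamma>)))"
    by (intro sum_mono) (simp add: powr_square)
  also have "\<dots> \<le> (\<Sum>\<^sub>\<infinity>j. knorm j powr (-(2 * \<gamma>)))"
    using assms knorm_powr_summable[of "2 * \<gamma>"] by (intro finite_sum_le_infsum) auto
  finally show ?thesis .
qed

text \<open>Here \<open>j\<close> is the dominant frequency: the ball sum \<open>\<Sum>\<^bsub>|l| < |j|\<^esub> |l|^{-2q} \<lesssim> |j|^{3-2q}\<close> is
  compensated by \<open>|j|^{-2p}\<close> exactly when \<open>p + q \<ge> 3/2\<close>.\<close>
lemma high_frequency_column_le: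
  assumes q: "0 \<le> q" "q < 3/2" and pq: "3/2 \<le> p + q"
  obtains K where "\<And>j A. finite A \<Longrightarrow>
    (\<Sum>l\<in>A. (if knorm l < knorm j then knorm j powr (-p) * knorm l powr (-q) else 0)\<^sup>2) \<le> K"
proof -
  obtain K where K: "\<And>R A. 1 \<le> R \<Longrightarrow> finite A \<Longrightarrow> A \<subseteq> {l. knorm l < R} \<Longrightarrow>
      (\<Sum>l\<in>A. knorm l powr (-(2 * q))) \<le> K * R powr (3 - 2 * q)"
    using knorm_powr_ball_sum_le[of "2 * q"] q by auto
  have K0: "0 \<le> K"
    using K[of 1 "{}"] by simp
  have "(\<Sum>l\<in>A. (if knorm l < knorm j then knorm j powr (-p) * knorm l powr (-q) else 0)\<^sup>2) \<le> K"
    if A: "finite A" for j A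
  proof (cases "j = 0")
    case True
    then show ?thesis
      using K0 by (simp add: leD[OF knorm_nonneg])
  next
    case False
    let ?A = "{l\<in>A. knorm l < knorm j}"
    have j: "1 \<le> knorm j"
      using knorm_ge_1[OF False] .
    have "(\<Sum>l\<in>A. (if knorm l < knorm j then knorm j powr (-p) * knorm l powr (-q) else 0)\<^sup>2)
        = (\<Sum>l\<in>A. knorm j powr (-(2 * p)) * (if knorm l < knorm j then knorm l powr (-(2 * q)) else 0))"
      by (intro sum.cong) (auto simp: power_mult_distrib powr_square)
    also have "\<dots> = knorm j powr (-(2 * p)) * (\<Sum>l\<in>?A. knorm l powr (-(2 * q)))"
      using A by (simp add: sum_distrib_left[symmetric] sum.inter_filter)
    also have "\<dots> \<le> knorm j powr (-(2 * p)) * (K * knorm j powr (3 - 2 * q))"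
      using A j by (intro mult_left_mono K) auto
    also have "\<dots> = K * knorm j powr (3 - 2 * q - 2 * p)"
      by (simp add: powr_add[symmetric] mult_ac)
    also have "\<dots> \<le> K * knorm j powr 0"
      using j pq K0 by (intro mult_left_mono powr_mono) auto
    finally show ?thesis
      using j by simp
  qed
  then show ?thesis
    using that by blast
qed

lemma trilinear_convolution_estimate:
  fixes \<gamma> s :: real
  assumes \<gamma>: "3/2 < \<gamma>" and s: "1 \<le> s" "s < \<gamma> + 1"
  obtains C where "0 < C"
    and "\<And>V T P S. (\<And>a. 0 \<le> V a) \<Longrightarrow> (\<And>a. 0 \<le> T a) \<Longrightarrow> (\<And>a. 0 \<le> P a) \<Longrightarrow>
      (\<lambda>a. (V a)\<^sup>2) summable_on UNIV \<Longrightarrow> (\<lambda>a. (T a)\<^sup>2) summable_on UNIV \<Longrightarrow>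
      (\<lambda>a. (P a)\<^sup>2) summable_on UNIV \<Longrightarrow> finite S \<Longrightarrow>
      (\<Sum>(j, l)\<in>S. V j * T l * P (j + l) *
          (knorm j powr (-\<gamma>) * knorm l powr (1 - s) * knorm (j + l) powr (s - 1)))
        \<le> C * sqrt (\<Sum>\<^sub>\<infinity>a. (V a)\<^sup>2) * sqrt (\<Sum>\<^sub>\<infinity>a. (T a)\<^sup>2) * sqrt (\<Sum>\<^sub>\<infinity>a. (P a)\<^sup>2)"
proof -
  define p where "p = \<gamma> - s + 1"
  define q where "q = max 0 (3/2 - p)"
  have q: "0 \<le> q" "q < 3/2" "3/2 \<le> p + q" "q \<le> s - 1"
    using \<gamma> s by (auto simp: q_def p_def max_def)
  define Y where "Y = (\<Sum>\<^sub>\<infinity>j. knorm j powr (-(2 * \<gamma>)))"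
  have Y: "0 \<le> Y"
    unfolding Y_def by (intro infsum_nonneg) simp
  obtain K where K: "\<And>j A. finite A \<Longrightarrow>
      (\<Sum>l\<in>A. (if knorm l < knorm j then knorm j powr (-p) * knorm l powr (-q) else 0)\<^sup>2) \<le> K"
    using high_frequency_column_le[OF q(1-3)] by blast
  have K0: "0 \<le> K"
    using K[of "{}"] by simp
  define C where "C = 2 powr (s - 1) * (sqrt Y + sqrt K + 1)"
  show ?thesis
  proof (rule that)
    show "0 < C"
      using Y K0 by (simp add: C_def add_nonneg_pos)
  next
    fix V T P :: "int^3 \<Rightarrow> real" and S :: "((int^3) \<times> (int^3)) set"
    assume nonneg: "\<And>a. 0 \<le> V a" "\<And>a. 0 \<le> T a" "\<And>a. 0 \<le> P a"
      and V: "(\<lambda>a. (V a)\<^sup>2) summable_on UNIV" and T: "(\<lambda>a. (T a)\<^sup>2) summable_on UNIV"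
      and P: "(\<lambda>a. (P a)\<^sup>2) summable_on UNIV" and S: "finite S"
    define nV where "nV = sqrt (\<Sum>\<^sub>\<infinity>a. (V a)\<^sup>2)"
    define nT where "nT = sqrt (\<Sum>\<^sub>\<infinity>a. (T a)\<^sup>2)"
    define nP where "nP = sqrt (\<Sum>\<^sub>\<infinity>a. (P a)\<^sup>2)"
    define low where "low = (\<lambda>j l. if knorm j \<le> knorm l then knorm j powr (-\<gamma>) else 0)"
    define high where "high = (\<lambda>l j. if knorm l < knorm j then knorm j powr (-p) * knorm l powr (-q) else 0)"
    have weight: "knorm j powr (-\<gamma>) * knorm l powr (1 - s) * knorm (j + l) powr (s - 1)
        \<le> 2 powr (s - 1) * (low j l + high l j)" for j l
    proof -
      have "s - 1 - \<gamma> = -p"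
        by (simp add: p_def)
      from convolution_weight_le[OF s(1) q(1,4), of j \<gamma> l, unfolded this]
      show ?thesis
        unfolding low_def high_def .
    qed
    have "(\<Sum>(j, l)\<in>S. V j * T l * P (j + l) *
          (knorm j powr (-\<gamma>) * knorm l powr (1 - s) * knorm (j + l) powr (s - 1)))
        \<le> (\<Sum>(j, l)\<in>S. V j * T l * P (j + l) * (2 powr (s - 1) * (low j l + high l j)))"
      using weight nonneg by (intro sum_mono) (auto intro!: mult_left_mono)
    also have "\<dots> = 2 powr (s - 1) * ((\<Sum>(j, l)\<in>S. V j * T l * P (j + l) * low j l)
        + (\<Sum>(j, l)\<in>S. V j * T l * P (j + l) * high l j))"
      by (simp add: sum_distrib_left sum.distrib[symmetric] case_prod_beta distrib_left mult_ac)
    also have "\<dots> \<le> 2 powr (s - 1) * (sqrt Y * nV * nT * nP + sqrt K * nT * nV * nP)"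
    proof -
      have low: "(\<Sum>(j, l)\<in>S. V j * T l * P (j + l) * low j l) \<le> sqrt Y * nV * nT * nP"
        unfolding nV_def nT_def nP_def Y_def low_def
        using \<gamma> by (intro convolution_sum_le S V T P low_frequency_column_le) auto
      have "(\<Sum>(j, l)\<in>S. V j * T l * P (j + l) * high l j)
          = (\<Sum>(l, j)\<in>prod.swap ` S. T l * V j * P (l + j) * high l j)"
        by (simp add: sum.reindex case_prod_beta add.commute mult.commute mult.left_commute)
      also have "\<dots> \<le> sqrt K * nT * nV * nP"
        unfolding nV_def nT_def nP_def high_def
        by (intro convolution_sum_le S V T P K finite_imageI)
      finally show ?thesis
        using low by (simp add: mult_ac)
    qed
    also have "\<dots> \<le> C * nV * nT * nP"
      using nonneg by (simp add: C_def nV_def nT_def nP_def algebra_simps infsum_nonneg)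
    finally show "(\<Sum>(j, l)\<in>S. V j * T l * P (j + l) *
          (knorm j powr (-\<gamma>) * knorm l powr (1 - s) * knorm (j + l) powr (s - 1)))
        \<le> C * nV * nT * nP" .
  qed
qed

section \<open>Back to Fourier coefficients\<close>

lemma norm_dotgrad_summand_le:
  "cmod (\<Sum>i\<in>UNIV. LambdaV a v j $ i * grad \<theta> m $ i)
    \<le> knorm j powr a * norm (v j) * knorm m * cmod (\<theta> m)"
proof -
  have "cmod (\<Sum>i\<in>UNIV. LambdaV a v j $ i * grad \<theta> m $ i)
      \<le> (\<Sum>i\<in>UNIV. cmod (LambdaV a v j $ i * grad \<theta> m $ i))"
    by (rule norm_sum)
  also have "\<dots> = knorm j powr a * cmod (\<theta> m) * (\<Sum>i\<in>UNIV. \<bar>cmod (v j $ i)\<bar> * \<bar>real_of_int (m $ i)\<bar>)"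
    by (simp add: LambdaV_def grad_def sum_distrib_left norm_mult mult_ac)
  also have "\<dots> \<le> knorm j powr a * cmod (\<theta> m)
      * (L2_set (\<lambda>i. cmod (v j $ i)) UNIV * L2_set (\<lambda>i. real_of_int (m $ i)) UNIV)"
    by (intro mult_left_mono L2_set_mult_ineq) auto
  also have "L2_set (\<lambda>i. cmod (v j $ i)) UNIV = norm (v j)"
    by (simp add: norm_vec_def)
  also have "L2_set (\<lambda>i. real_of_int (m $ i)) UNIV = knorm m"
    by (simp add: knorm_def L2_set_def)
  finally show ?thesis
    by (simp add: mult_ac)
qed

lemma norm_dotgrad_le:
  assumes "(\<lambda>j. knorm j powr a * norm (v j) * knorm (k - j) * cmod (\<theta> (k - j))) summable_on UNIV"
  shows "cmod (dotgrad (LambdaV a v) \<theta> k)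
    \<le> (\<Sum>\<^sub>\<infinity>j. knorm j powr a * norm (v j) * knorm (k - j) * cmod (\<theta> (k - j)))"
proof -
  let ?D = "\<lambda>j. \<Sum>i\<in>UNIV. LambdaV a v j $ i * grad \<theta> (k - j) $ i"
  have abs: "(\<lambda>j. norm (?D j)) summable_on UNIV"
    using assms norm_dotgrad_summand_le by (rule summable_on_comparison_test) auto
  have "cmod (dotgrad (LambdaV a v) \<theta> k) \<le> (\<Sum>\<^sub>\<infinity>j. cmod (?D j))"
    unfolding dotgrad_def using abs by (rule norm_infsum_bound)
  also have "\<dots> \<le> (\<Sum>\<^sub>\<infinity>j. knorm j powr a * norm (v j) * knorm (k - j) * cmod (\<theta> (k - j)))"
    using abs assms norm_dotgrad_summand_le by (rule infsum_mono)
  finally show ?thesis .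
qed

lemma norm_infsum_le_double_sum_bound:
  fixes F :: "'a \<Rightarrow> 'c::banach" and E :: "'a \<times> 'b \<Rightarrow> real"
  assumes E: "\<And>p. 0 \<le> E p" and bound: "\<And>S. finite S \<Longrightarrow> sum E S \<le> B"
    and F: "\<And>k. (\<lambda>j. E (k, j)) summable_on UNIV \<Longrightarrow> norm (F k) \<le> (\<Sum>\<^sub>\<infinity>j. E (k, j))"
  shows "norm (\<Sum>\<^sub>\<infinity>k. F k) \<le> B"
proof -
  have sE: "E summable_on UNIV"
    using E bound by (intro nonneg_bdd_above_summable_on bdd_aboveI2) auto
  then have rows: "(\<lambda>j. E (k, j)) summable_on UNIV" for k
    using summable_on_SigmaD1[of "\<lambda>k j. E (k, j)" UNIV "\<lambda>_. UNIV" k] by simp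
  have se: "(\<lambda>k. \<Sum>\<^sub>\<infinity>j. E (k, j)) summable_on UNIV"
    using summable_on_SigmaD[of E UNIV "\<lambda>_. UNIV"] sE rows by simp
  have abs: "(\<lambda>k. norm (F k)) summable_on UNIV"
    by (rule summable_on_comparison_test[OF se]) (use F rows in auto)
  have "norm (\<Sum>\<^sub>\<infinity>k. F k) \<le> (\<Sum>\<^sub>\<infinity>k. norm (F k))"
    using abs by (rule norm_infsum_bound)
  also have "\<dots> \<le> (\<Sum>\<^sub>\<infinity>k. \<Sum>\<^sub>\<infinity>j. E (k, j))"
    using abs se F rows by (intro infsum_mono) auto
  also have "\<dots> = infsum E UNIV"
    using infsum_Sigma_banach[of E UNIV "\<lambda>_. UNIV"] sE by simp
  also have "\<dots> \<le> B"
    using sE bound by (rule infsum_le_finite_sums)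
  finally show ?thesis .
qed

lemma norm_l2pair_dotgrad_le:
  assumes "\<And>S. finite S \<Longrightarrow> (\<Sum>(k, j)\<in>S. knorm j powr a * norm (v j) * knorm (k - j) * cmod (\<theta> (k - j))
      * (knorm k powr b * cmod (\<phi> k))) \<le> B"
  shows "cmod (l2pair (dotgrad (LambdaV a v) \<theta>) (Lambda b \<phi>)) \<le> (2 * pi) ^ 3 * B"
proof -
  define D where "D = (\<lambda>k j. knorm j powr a * norm (v j) * knorm (k - j) * cmod (\<theta> (k - j)))"
  define E where "E = (\<lambda>(k, j). D k j * (knorm k powr b * cmod (\<phi> k)))"
  have row: "cmod (dotgrad (LambdaV a v) \<theta> k * cnj (Lambda b \<phi> k)) \<le> (\<Sum>\<^sub>\<infinity>j. E (k, j))"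
    if sE: "(\<lambda>j. E (k, j)) summable_on UNIV" for k
  proof (cases "knorm k powr b * cmod (\<phi> k) = 0")
    case True
    then show ?thesis
      by (auto simp: E_def Lambda_def norm_mult)
  next
    case False
    then have "(\<lambda>j. E (k, j) * (1 / (knorm k powr b * cmod (\<phi> k)))) summable_on UNIV"
      using sE by (intro summable_on_cmult_left)
    then have "(\<lambda>j. D k j) summable_on UNIV"
      using False by (simp add: E_def)
    then have "cmod (dotgrad (LambdaV a v) \<theta> k) \<le> (\<Sum>\<^sub>\<infinity>j. D k j)"
      unfolding D_def by (rule norm_dotgrad_le)
    then have "cmod (dotgrad (LambdaV a v) \<theta> k) * (knorm k powr b * cmod (\<phi> k))
        \<le> (\<Sum>\<^sub>\<infinity>j. D k j) * (knorm k powr b * cmod (\<phi> k))"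
      by (rule mult_right_mono) simp
    then show ?thesis
      by (simp add: E_def Lambda_def norm_mult infsum_cmult_left' mult_ac)
  qed
  have "cmod (\<Sum>\<^sub>\<infinity>k. dotgrad (LambdaV a v) \<theta> k * cnj (Lambda b \<phi> k)) \<le> B"
  proof (rule norm_infsum_le_double_sum_bound)
    show "\<And>S. finite S \<Longrightarrow> sum E S \<le> B"
      using assms by (simp add: E_def D_def case_prod_beta)
  qed (use row in \<open>auto simp: E_def D_def\<close>)
  then show ?thesis
    unfolding l2pair_def norm_mult by (simp add: norm_power mult_left_mono)
qed

lemma weighted_square_eq: "(knorm k powr s * x)\<^sup>2 = x\<^sup>2 * knorm k powr (2 * s)"
  by (simp add: power_mult_distrib powr_square mult.commute)

lemma Hs_weighted_summable: "Hs s f \<Longrightarrow> (\<lambda>k. (knorm k powr s * cmod (f k))\<^sup>2) summable_on UNIV"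
  by (simp add: Hs_def weighted_square_eq)

lemma Hnorm_eq_weighted: "Hnorm s f = sqrt (\<Sum>\<^sub>\<infinity>k. (knorm k powr s * cmod (f k))\<^sup>2)"
  by (simp add: Hnorm_def weighted_square_eq)

lemma Vs_weighted_summable: "Vs s w \<Longrightarrow> (\<lambda>k. (knorm k powr s * norm (w k))\<^sup>2) summable_on UNIV"
  by (simp add: Vs_def weighted_square_eq)

lemma Vnorm_eq_weighted: "Vnorm s w = sqrt (\<Sum>\<^sub>\<infinity>k. (knorm k powr s * norm (w k))\<^sup>2)"
  by (simp add: Vnorm_def weighted_square_eq)

lemma pairing_weight_factorization:
  "knorm j powr (\<sigma> - \<gamma>) * x * knorm (k - j) * y * (knorm k powr (2 * s - 2) * z)
    = (knorm j powr \<sigma> * x) * (knorm (k - j) powr s * y) * (knorm k powr (s - 1) * z)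
      * (knorm j powr (-\<gamma>) * knorm (k - j) powr (1 - s) * knorm k powr (s - 1))"
proof -
  have j: "knorm j powr \<sigma> * knorm j powr (-\<gamma>) = knorm j powr (\<sigma> - \<gamma>)"
    and kj: "knorm (k - j) powr s * knorm (k - j) powr (1 - s) = knorm (k - j)"
    and k: "knorm k powr (s - 1) * knorm k powr (s - 1) = knorm k powr (2 * s - 2)"
    by (simp_all flip: powr_add)
  have "(knorm j powr \<sigma> * x) * (knorm (k - j) powr s * y) * (knorm k powr (s - 1) * z)
      * (knorm j powr (-\<gamma>) * knorm (k - j) powr (1 - s) * knorm k powr (s - 1))
    = (knorm j powr \<sigma> * knorm j powr (-\<gamma>)) * x * (knorm (k - j) powr s * knorm (k - j) powr (1 - s)) * y
      * ((knorm k powr (s - 1) * knorm k powr (s - 1)) * z)"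
    by (simp only: mult_ac)
  then show ?thesis
    unfolding j kj k by (rule sym)
qed

lemma dotgrad_pairing_estimate:
  fixes \<gamma> \<sigma> s :: real
  assumes "3/2 < \<gamma>" "1 \<le> s" "s < \<gamma> + 1"
  shows "\<exists>C>0. \<forall>v \<theta> \<phi>. Vs \<sigma> v \<longrightarrow> Hs s \<theta> \<longrightarrow> Hs (s - 1) \<phi> \<longrightarrow>
    cmod (l2pair (dotgrad (LambdaV (\<sigma> - \<gamma>) v) \<theta>) (Lambda (2 * s - 2) \<phi>))
      \<le> C * Vnorm \<sigma> v * Hnorm s \<theta> * Hnorm (s - 1) \<phi>"
proof -
  obtain C0 where C0: "0 < C0"
    and est: "\<And>V T P S. (\<And>a. 0 \<le> V a) \<Longrightarrow> (\<And>a. 0 \<le> T a) \<Longrightarrow> (\<And>a. 0 \<le> P a) \<Longrightarrow>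
      (\<lambda>a. (V a)\<^sup>2) summable_on UNIV \<Longrightarrow> (\<lambda>a. (T a)\<^sup>2) summable_on UNIV \<Longrightarrow>
      (\<lambda>a. (P a)\<^sup>2) summable_on UNIV \<Longrightarrow> finite S \<Longrightarrow>
      (\<Sum>(j, l)\<in>S. V j * T l * P (j + l) *
          (knorm j powr (-\<gamma>) * knorm l powr (1 - s) * knorm (j + l) powr (s - 1)))
        \<le> C0 * sqrt (\<Sum>\<^sub>\<infinity>a. (V a)\<^sup>2) * sqrt (\<Sum>\<^sub>\<infinity>a. (T a)\<^sup>2) * sqrt (\<Sum>\<^sub>\<infinity>a. (P a)\<^sup>2)"
    using trilinear_convolution_estimate[OF assms] by blast
  show ?thesis
  proof (intro exI[of _ "(2 * pi) ^ 3 * C0"] conjI allI impI)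
    show "0 < (2 * pi) ^ 3 * C0"
      using C0 by simp
    fix v \<theta> \<phi>
    assume v: "Vs \<sigma> v" and \<theta>: "Hs s \<theta>" and \<phi>: "Hs (s - 1) \<phi>"
    define V where "V = (\<lambda>j. knorm j powr \<sigma> * norm (v j))"
    define T where "T = (\<lambda>l. knorm l powr s * cmod (\<theta> l))"
    define P where "P = (\<lambda>k. knorm k powr (s - 1) * cmod (\<phi> k))"
    have "(\<Sum>(k, j)\<in>S. knorm j powr (\<sigma> - \<gamma>) * norm (v j) * knorm (k - j) * cmod (\<theta> (k - j))
        * (knorm k powr (2 * s - 2) * cmod (\<phi> k)))
      \<le> C0 * Vnorm \<sigma> v * Hnorm s \<theta> * Hnorm (s - 1) \<phi>" if S: "finite S" for S
    proof -
      have inj: "inj_on (\<lambda>(k, j). (j, k - j)) S"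
        by (auto simp: inj_on_def)
      have "(\<Sum>(k, j)\<in>S. knorm j powr (\<sigma> - \<gamma>) * norm (v j) * knorm (k - j) * cmod (\<theta> (k - j))
          * (knorm k powr (2 * s - 2) * cmod (\<phi> k)))
        = (\<Sum>(k, j)\<in>S. V j * T (k - j) * P k *
            (knorm j powr (-\<gamma>) * knorm (k - j) powr (1 - s) * knorm k powr (s - 1)))"
        unfolding V_def T_def P_def pairing_weight_factorization ..
      also have "\<dots> = (\<Sum>(j, l)\<in>(\<lambda>(k, j). (j, k - j)) ` S. V j * T l * P (j + l) *
            (knorm j powr (-\<gamma>) * knorm l powr (1 - s) * knorm (j + l) powr (s - 1)))"
        by (subst sum.reindex[OF inj]) (simp add: case_prod_beta)
      also have "\<dots> \<le> C0 * Vnorm \<sigma> v * Hnorm s \<theta> * Hnorm (s - 1) \<phi>"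
        unfolding Vnorm_eq_weighted Hnorm_eq_weighted V_def T_def P_def
        using Vs_weighted_summable[OF v] Hs_weighted_summable[OF \<theta>] Hs_weighted_summable[OF \<phi>] S
        by (intro est) auto
      finally show ?thesis .
    qed
    then show "cmod (l2pair (dotgrad (LambdaV (\<sigma> - \<gamma>) v) \<theta>) (Lambda (2 * s - 2) \<phi>))
        \<le> (2 * pi) ^ 3 * C0 * Vnorm \<sigma> v * Hnorm s \<theta> * Hnorm (s - 1) \<phi>"
      using norm_l2pair_dotgrad_le by (simp add: mult.assoc)
  qed
qed

text \<open>Only \<open>r > 2\<beta>\<close>, \<open>r > \<beta> + 1\<close> and \<open>\<beta> < 5/2\<close> enter the estimate.\<close>
theorem lemma15:
  fixes \<alpha> \<beta> r :: real
  assumes "1/2 < \<beta>" and "\<beta> < 5/4" and "\<alpha> + \<beta> = 5/4"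
    and "r > max (2 * \<beta>) (\<beta> + 1)"
  shows "\<exists>C>0. \<forall>v \<theta> \<phi>. Vs (r - 1) v \<longrightarrow> Hs (r - \<beta>) \<theta> \<longrightarrow> Hs (r - \<beta> - 1) \<phi> \<longrightarrow>
    cmod (l2pair (dotgrad (LambdaV (-2 * \<alpha>) v) \<theta>) (Lambda (2 * r - 2 * \<beta> - 2) \<phi>))
      \<le> C * Vnorm (r - 1) v * Hnorm (r - \<beta>) \<theta> * Hnorm (r - \<beta> - 1) \<phi>"
proof -
  have "-2 * \<alpha> = (r - 1) - (r + 3/2 - 2 * \<beta>)" "2 * r - 2 * \<beta> - 2 = 2 * (r - \<beta>) - 2"
    "r - \<beta> - 1 = (r - \<beta>) - 1"
    using assms(3) by auto
  moreover have "3/2 < r + 3/2 - 2 * \<beta>" "1 \<le> r - \<beta>" "r - \<beta> < (r + 3/2 - 2 * \<beta>) + 1"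
    using assms by auto
  ultimately show ?thesis
    using dotgrad_pairing_estimate[of "r + 3/2 - 2 * \<beta>" "r - \<beta>" "r - 1"] by simp
qed

end
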